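(* Let $E/F$ be an unramified quadratic extension of nonarchimedean local fields of characteristic $0$ and $\beta\in\mathrm{GL}_n(E)$ skew-Hermitian. Let $\gamma\in\mathrm{GL}_n(E)$ be normal and Kottwitz with $\bar\gamma\gamma$ regular semisimple, and let $\zeta\in\mathrm{GL}_n(E)$ be Kottwitz with respect to $\beta$. Then: (1) if $g\in\mathrm{GL}_n(E)$ and $g^{-1}\bar\gamma\gamma g\in\mathrm{GL}_n(\mathcal{O}_E)$, then $g^{-1}\gamma g\in\mathrm{GL}_n(\mathcal{O}_E)$; (2) if $g\in\mathrm{GL}_n(E)$ and $g^{-1}\gamma\bar g\in\mathrm{GL}_n(\mathcal{O}_E)$, then $g\in\mathrm{GL}_n(F)\mathrm{GL}_n(\mathcal{O}_E)$; (3) if $h\in\mathrm{U}_n^\beta(F)$ and $h^{-1}(\beta^{-1}\zeta^*\beta\zeta)h\in\mathrm{GL}_n(\mathcal{O}_E)$, then $h^{-1}\zeta h\in\mathrm{GL}_n(\mathcal{O}_E)$.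
   Context: $x\mapsto\bar x$ is the nontrivial automorphism of $E/F$ (applied entrywise), $g^*={}^t\bar g$; skew-Hermitian means $\beta^*=-\beta$, and $\mathrm{U}_n^\beta(F)=\{h\in\mathrm{GL}_n(E):h^*\beta h=\beta\}$. $\gamma$ is normal if $\bar\gamma\gamma\in\mathrm{GL}_n(F)$. $\gamma$ is Kottwitz if either $\gamma=c_{n-1}(\bar\gamma\gamma)^{n-1}+\dots+c_0$ for some $c_i\in\mathcal{O}_E$, or there is no $g\in\mathrm{GL}_n(E)$ with $g^{-1}\bar\gamma\gamma g\in\mathrm{GL}_n(\mathcal{O}_E)$. $\zeta$ is Kottwitz with respect to $\beta$ if either $\zeta=c_{n-1}(\beta^{-1}\zeta^*\beta\zeta)^{n-1}+\dots+c_0$ for some $c_i\in\mathcal{O}_E$, or there is no $h\in\mathrm{U}_n^\beta(F)$ with $h^{-1}(\beta^{-1}\zeta^*\beta\zeta)h\in\mathrm{GL}_n(\mathcal{O}_E)$. *)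

theory Defs
  imports "Jordan_Normal_Form.Matrix" "Jordan_Normal_Form.Char_Poly"
    "HOL-Computational_Algebra.Polynomial"
begin

text \<open>The field E is a type 'e of characteristic 0, equipped with a normalised
discrete valuation v (only its values on nonzero elements matter) and a field
automorphism sigma of order 2 (the nontrivial element of Gal(E/F));
F is the fixed field of sigma.\<close>

definition Ointeg :: "('e::field \<Rightarrow> int) \<Rightarrow> 'e set" where
  "Ointeg v = {x. x = 0 \<or> 0 \<le> v x}"

definition fixed_field :: "('e \<Rightarrow> 'e) \<Rightarrow> 'e set" where
  "fixed_field \<sigma> = {x. \<sigma> x = x}"

text \<open>v is a normalised (surjective onto the integers) discrete valuation on E,
E is complete for it, and the residue field O/m is finite
(given by a finite set of representatives).\<close>
definition nonarch_local_field :: "('e::field \<Rightarrow> int) \<Rightarrow> bool" where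
  "nonarch_local_field v \<longleftrightarrow>
     (\<forall>x y. x \<noteq> 0 \<longrightarrow> y \<noteq> 0 \<longrightarrow> v (x * y) = v x + v y) \<and>
     (\<forall>x y. x \<noteq> 0 \<longrightarrow> y \<noteq> 0 \<longrightarrow> x + y \<noteq> 0 \<longrightarrow> min (v x) (v y) \<le> v (x + y)) \<and>
     (\<forall>k. \<exists>x. x \<noteq> 0 \<and> v x = k) \<and>
     (\<forall>X :: nat \<Rightarrow> 'e.
        (\<forall>k. \<exists>N. \<forall>m\<ge>N. \<forall>l\<ge>N. X m = X l \<or> k \<le> v (X m - X l)) \<longrightarrow>
        (\<exists>L. \<forall>k. \<exists>N. \<forall>m\<ge>N. X m = L \<or> k \<le> v (X m - L))) \<and>
     (\<exists>S. finite S \<and> S \<subseteq> Ointeg v \<and>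
        (\<forall>x\<in>Ointeg v. \<exists>s\<in>S. x = s \<or> 1 \<le> v (x - s)))"

text \<open>E/F unramified quadratic, F the fixed field of the automorphism sigma of order 2,
sigma preserving the valuation, and a uniformiser of E lying in F (ramification index 1).\<close>
definition unram_quad_ext :: "('e::field_char_0 \<Rightarrow> int) \<Rightarrow> ('e \<Rightarrow> 'e) \<Rightarrow> bool" where
  "unram_quad_ext v \<sigma> \<longleftrightarrow>
     nonarch_local_field v \<and>
     (\<forall>x y. \<sigma> (x + y) = \<sigma> x + \<sigma> y) \<and>
     (\<forall>x y. \<sigma> (x * y) = \<sigma> x * \<sigma> y) \<and>
     (\<forall>x. \<sigma> (\<sigma> x) = x) \<and> (\<exists>x. \<sigma> x \<noteq> x) \<and>
     (\<forall>x. x \<noteq> 0 \<longrightarrow> v (\<sigma> x) = v x) \<and>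
     (\<exists>\<pi>\<in>fixed_field \<sigma>. \<pi> \<noteq> 0 \<and> v \<pi> = 1)"

definition minv :: "nat \<Rightarrow> 'e::field mat \<Rightarrow> 'e mat" where
  "minv n A = (SOME B. B \<in> carrier_mat n n \<and> A * B = 1\<^sub>m n \<and> B * A = 1\<^sub>m n)"

definition GL :: "nat \<Rightarrow> 'e::field mat set" where
  "GL n = {A. A \<in> carrier_mat n n \<and> invertible_mat A}"

definition GL_over :: "nat \<Rightarrow> 'e::field set \<Rightarrow> 'e mat set" where
  "GL_over n R = {A. A \<in> GL n \<and> (\<forall>i<n. \<forall>j<n. A $$ (i,j) \<in> R \<and> minv n A $$ (i,j) \<in> R)}"

definition mbar :: "('e \<Rightarrow> 'e) \<Rightarrow> 'e mat \<Rightarrow> 'e mat" where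
  "mbar \<sigma> A = map_mat \<sigma> A"

definition mstar :: "('e \<Rightarrow> 'e) \<Rightarrow> 'e mat \<Rightarrow> 'e mat" where
  "mstar \<sigma> A = transpose_mat (map_mat \<sigma> A)"

definition skew_hermitian :: "('e::field \<Rightarrow> 'e) \<Rightarrow> 'e mat \<Rightarrow> bool" where
  "skew_hermitian \<sigma> \<beta> \<longleftrightarrow> mstar \<sigma> \<beta> = - \<beta>"

definition unitary_group :: "nat \<Rightarrow> ('e::field \<Rightarrow> 'e) \<Rightarrow> 'e mat \<Rightarrow> 'e mat set" where
  "unitary_group n \<sigma> \<beta> = {h. h \<in> GL n \<and> mstar \<sigma> h * \<beta> * h = \<beta>}"

definition normal_mat :: "nat \<Rightarrow> ('e::field \<Rightarrow> 'e) \<Rightarrow> 'e mat \<Rightarrow> bool" where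
  "normal_mat n \<sigma> \<gamma> \<longleftrightarrow> mbar \<sigma> \<gamma> * \<gamma> \<in> GL_over n (fixed_field \<sigma>)"

definition mat_poly_eval :: "nat \<Rightarrow> (nat \<Rightarrow> 'e::comm_ring_1) \<Rightarrow> 'e mat \<Rightarrow> 'e mat" where
  "mat_poly_eval n c A = foldr (\<lambda>i M. c i \<cdot>\<^sub>m (A ^\<^sub>m i) + M) [0..<n] (0\<^sub>m n n)"

text \<open>Regular semisimple: the characteristic polynomial has n distinct roots in an
algebraic closure, i.e. it is separable.\<close>
definition regular_semisimple :: "'e::field mat \<Rightarrow> bool" where
  "regular_semisimple A \<longleftrightarrow> coprime (char_poly A) (pderiv (char_poly A))"

definition kottwitz :: "nat \<Rightarrow> ('e::field_char_0 \<Rightarrow> int) \<Rightarrow> ('e \<Rightarrow> 'e) \<Rightarrow> 'e mat \<Rightarrow> bool" where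
  "kottwitz n v \<sigma> \<gamma> \<longleftrightarrow>
     (\<exists>c. (\<forall>i<n. c i \<in> Ointeg v) \<and> \<gamma> = mat_poly_eval n c (mbar \<sigma> \<gamma> * \<gamma>)) \<or>
     \<not> (\<exists>g\<in>GL n. minv n g * (mbar \<sigma> \<gamma> * \<gamma>) * g \<in> GL_over n (Ointeg v))"

definition kottwitz_wrt :: "nat \<Rightarrow> ('e::field_char_0 \<Rightarrow> int) \<Rightarrow> ('e \<Rightarrow> 'e) \<Rightarrow> 'e mat \<Rightarrow> 'e mat \<Rightarrow> bool" where
  "kottwitz_wrt n v \<sigma> \<beta> \<zeta> \<longleftrightarrow>
     (let N = minv n \<beta> * mstar \<sigma> \<zeta> * \<beta> * \<zeta> in
     (\<exists>c. (\<forall>i<n. c i \<in> Ointeg v) \<and> \<zeta> = mat_poly_eval n c N) \<or>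
     \<not> (\<exists>h\<in>unitary_group n \<sigma> \<beta>. minv n h * N * h \<in> GL_over n (Ointeg v)))"

end

theory Submission
  imports Defs
begin

text \<open>
  Parts (1) and (3) need only the Kottwitz condition: either its second clause makes the hypothesis
  impossible, or the matrix is a polynomial with integral coefficients in its norm N, so every
  conjugate of it is integral where the same conjugate of N is; its determinant is then a unit
  because det N is the norm of it.

  For (2), write \<sigma>(g) for g with \<sigma> applied entrywise and put k = g^-1 \<gamma> \<sigma>(g). Then
  \<sigma>(k) k = \<sigma>(g)^-1 \<sigma>(\<gamma>) \<gamma> \<sigma>(g) is integral, so by (1) so is \<sigma>(g)^-1 \<gamma> \<sigma>(g), and hence
  so is c = g^-1 \<sigma>(g), which satisfies c \<sigma>(c) = 1. Lang's theorem for GL_n over the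
  unramified extension gives b in GL_n(O_E) with c \<sigma>(b) = b; then a = g b is \<sigma>-fixed and
  g = a b^-1. Lang's theorem is proved by hand: b = X + c \<sigma>(X) with X diagonal with entries
  in {1, \<alpha>}, where \<alpha> - \<sigma>(\<alpha>) is a unit (the residue extension is nontrivial); expanding det b
  column by column shows that some choice of X makes it a unit.
\<close>

text \<open>Square instances of library lemmas, whose side conditions simp discharges once n is fixed.\<close>

lemma mult_assoc_sq_mat:
  fixes A B C :: "'a::semiring_0 mat"
  assumes "A \<in> carrier_mat n n" "B \<in> carrier_mat n n" "C \<in> carrier_mat n n"
  shows "A * B * C = A * (B * C)"
  using assms by (rule assoc_mult_mat)

lemma mult_sq_carrier_mat:
  fixes A B :: "'a::semiring_0 mat"
  shows "A \<in> carrier_mat n n \<Longrightarrow> B \<in> carrier_mat n n \<Longrightarrow> A * B \<in> carrier_mat n n"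
  by auto

lemma right_inverse_GL:
  fixes A B :: "'a::field mat"
  assumes A: "A \<in> carrier_mat n n" and B: "B \<in> carrier_mat n n" and AB: "A * B = 1\<^sub>m n"
  shows "A \<in> GL n" "minv n A = B"
proof -
  have BA: "B * A = 1\<^sub>m n" by (rule mat_mult_left_right_inverse[OF A B AB])
  then show "A \<in> GL n"
    unfolding GL_def invertible_mat_def inverts_mat_def using A B AB by auto
  have "\<exists>C. C \<in> carrier_mat n n \<and> A * C = 1\<^sub>m n \<and> C * A = 1\<^sub>m n" using B AB BA by auto
  from someI_ex[OF this] have C: "minv n A \<in> carrier_mat n n" "minv n A * A = 1\<^sub>m n"
    unfolding minv_def by auto
  have "minv n A = minv n A * (A * B)" using C B AB by auto
  also have "\<dots> = B" using C A B by (simp add: mult_assoc_sq_mat[of _ n, symmetric])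
  finally show "minv n A = B" .
qed

lemma GL_D:
  fixes A :: "'a::field mat"
  assumes "A \<in> GL n"
  shows "A \<in> carrier_mat n n" "minv n A \<in> carrier_mat n n" "A * minv n A = 1\<^sub>m n"
    "minv n A * A = 1\<^sub>m n" "det A \<noteq> 0"
proof -
  show A: "A \<in> carrier_mat n n" using assms unfolding GL_def by auto
  from assms obtain B where AB: "A * B = 1\<^sub>m (dim_row A)" and BA: "B * A = 1\<^sub>m (dim_row B)"
    unfolding GL_def invertible_mat_def inverts_mat_def by auto
  have B: "B \<in> carrier_mat n n"
    using arg_cong[OF AB, of dim_col] arg_cong[OF BA, of dim_col] A by auto
  with A AB BA have AB: "A * B = 1\<^sub>m n" and BA: "B * A = 1\<^sub>m n" by auto
  have "minv n A = B" by (rule right_inverse_GL(2)[OF A B AB])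
  then show "minv n A \<in> carrier_mat n n" "A * minv n A = 1\<^sub>m n" "minv n A * A = 1\<^sub>m n"
    using B AB BA by auto
  have "det A * det B = 1" using det_mult[OF A B] AB by simp
  then show "det A \<noteq> 0" by auto
qed

lemma GL_cancel:
  fixes A X :: "'a::field mat"
  assumes "A \<in> GL n" "X \<in> carrier_mat n n"
  shows "A * (minv n A * X) = X" "minv n A * (A * X) = X"
  using GL_D[OF assms(1)] assms(2) by (simp_all add: mult_assoc_sq_mat[of _ n, symmetric])

lemma det_nonzero_GL:
  fixes A :: "'a::field mat"
  assumes A: "A \<in> carrier_mat n n" and d: "det A \<noteq> 0"
  shows "A \<in> GL n" "minv n A = inverse (det A) \<cdot>\<^sub>m adj_mat A"
proof -
  have "A * (inverse (det A) \<cdot>\<^sub>m adj_mat A) = 1\<^sub>m n"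
    using A adj_mat[OF A] d by (auto simp: mult_smult_distrib intro!: eq_matI)
  from right_inverse_GL[OF A _ this] adj_mat(1)[OF A]
  show "A \<in> GL n" "minv n A = inverse (det A) \<cdot>\<^sub>m adj_mat A" by auto
qed

lemma minv_GL:
  fixes A :: "'a::field mat"
  assumes "A \<in> GL n"
  shows "minv n A \<in> GL n" "minv n (minv n A) = A"
  using right_inverse_GL[OF GL_D(2,1,4)[OF assms]] by auto

lemma det_minv:
  fixes A :: "'a::field mat"
  assumes "A \<in> GL n"
  shows "det (minv n A) = inverse (det A)"
proof -
  have "det A * det (minv n A) = 1" using det_mult[OF GL_D(1,2)[OF assms]] GL_D(3)[OF assms] by simp
  then show ?thesis using GL_D(5)[OF assms] by (simp add: field_simps)
qed

lemma GL_mult: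
  fixes A B :: "'a::field mat"
  assumes "A \<in> GL n" "B \<in> GL n"
  shows "A * B \<in> GL n" "minv n (A * B) = minv n B * minv n A"
proof -
  note GL_D[OF assms(1)] GL_D[OF assms(2)]
  then have "(A * B) * (minv n B * minv n A) = 1\<^sub>m n"
    by (simp add: mult_assoc_sq_mat[of _ n] GL_cancel[OF assms(2)])
  from right_inverse_GL[OF _ _ this] GL_D[OF assms(1)] GL_D[OF assms(2)]
  show "A * B \<in> GL n" "minv n (A * B) = minv n B * minv n A" by auto
qed

lemma minv_conj:
  fixes A g :: "'a::field mat"
  assumes "g \<in> GL n" "A \<in> GL n"
  shows "minv n (minv n g * A * g) = minv n g * minv n A * g"
  using GL_mult[OF GL_mult(1)[OF minv_GL(1)[OF assms(1)] assms(2)] assms(1)]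
    GL_mult[OF minv_GL(1)[OF assms(1)] assms(2)] minv_GL[OF assms(1)] GL_D[OF assms(1)] GL_D[OF assms(2)]
  by (simp add: mult_assoc_sq_mat[of _ n])

lemma det_conj:
  fixes A h :: "'a::field mat"
  assumes h: "h \<in> GL n" and A: "A \<in> carrier_mat n n"
  shows "det (minv n h * A * h) = det A"
  using GL_D[OF h] A det_minv[OF h]
  by (simp add: det_mult[of _ n] mult_sq_carrier_mat field_simps)

lemma conj_mat_pow:
  fixes A h :: "'a::field mat"
  assumes h: "h \<in> GL n" and A: "A \<in> carrier_mat n n"
  shows "minv n h * (A ^\<^sub>m k) * h = (minv n h * A * h) ^\<^sub>m k"
proof -
  have "similar_mat_wit (minv n h * A * h) A (minv n h) h"
    unfolding similar_mat_wit_def Let_def using GL_D[OF h] A by auto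
  from similar_mat_wit_pow_id[OF this, of k] show ?thesis by simp
qed

lemma conj_mat_poly_eval:
  fixes A h :: "'a::field mat"
  assumes h: "h \<in> GL n" and A: "A \<in> carrier_mat n n"
  shows "minv n h * mat_poly_eval n c A * h = mat_poly_eval n c (minv n h * A * h)"
proof -
  note h' = GL_D[OF h]
  have "minv n h * foldr (\<lambda>i M. c i \<cdot>\<^sub>m (A ^\<^sub>m i) + M) is (0\<^sub>m n n) * h
      = foldr (\<lambda>i M. c i \<cdot>\<^sub>m ((minv n h * A * h) ^\<^sub>m i) + M) is (0\<^sub>m n n)
    \<and> foldr (\<lambda>i M. c i \<cdot>\<^sub>m (A ^\<^sub>m i) + M) is (0\<^sub>m n n) \<in> carrier_mat n n" for "is"
  proof (induction "is")
    case (Cons i "is")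
    let ?M = "foldr (\<lambda>i M. c i \<cdot>\<^sub>m (A ^\<^sub>m i) + M) is (0\<^sub>m n n)"
    have "minv n h * (c i \<cdot>\<^sub>m (A ^\<^sub>m i) + ?M) * h
        = c i \<cdot>\<^sub>m (minv n h * (A ^\<^sub>m i) * h) + minv n h * ?M * h"
      using h' A Cons.IH by (simp add: mult_add_distrib_mat[of _ n n _ n]
          add_mult_distrib_mat[of _ n n _ _ n] mult_smult_distrib[of _ n n _ n]
          mult_smult_assoc_mat[of _ n n _ n])
    then show ?case using Cons.IH A by (simp add: conj_mat_pow[OF h A])
  qed (use h' in simp)
  then show ?thesis unfolding mat_poly_eval_def by simp
qed

section \<open>The valuation ring\<close>

locale unramified_quadratic =
  fixes v :: "'e::field_char_0 \<Rightarrow> int" and \<sigma> :: "'e \<Rightarrow> 'e"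
  assumes unram_quad: "unram_quad_ext v \<sigma>"
begin

abbreviation \<O> :: "'e set" where "\<O> \<equiv> Ointeg v"

definition \<mm> :: "'e set" where "\<mm> = {x. x = 0 \<or> 1 \<le> v x}"

definition \<U> :: "'e set" where "\<U> = {x. x \<noteq> 0 \<and> v x = 0}"

lemma local_field: "nonarch_local_field v"
  using unram_quad unfolding unram_quad_ext_def by auto

lemma val_mult: "x \<noteq> 0 \<Longrightarrow> y \<noteq> 0 \<Longrightarrow> v (x * y) = v x + v y"
  using local_field unfolding nonarch_local_field_def by blast

lemma val_add: "x \<noteq> 0 \<Longrightarrow> y \<noteq> 0 \<Longrightarrow> x + y \<noteq> 0 \<Longrightarrow> min (v x) (v y) \<le> v (x + y)"
  using local_field unfolding nonarch_local_field_def by blast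

lemma val_one: "v 1 = 0"
  using val_mult[of 1 1] by simp

lemma val_uminus: "x \<noteq> 0 \<Longrightarrow> v (- x) = v x"
  using val_mult[of "-1" "-1"] val_mult[of "-1" x] val_one by simp

lemma val_inverse: "x \<noteq> 0 \<Longrightarrow> v (inverse x) = - v x"
  using val_mult[of x "inverse x"] val_one by simp

lemma val_power: "x \<noteq> 0 \<Longrightarrow> v (x ^ k) = int k * v x"
  by (induction k) (auto simp: val_one val_mult algebra_simps)

lemma zero_in_O [simp]: "0 \<in> \<O>" and one_in_O [simp]: "1 \<in> \<O>"
  unfolding Ointeg_def by (auto simp: val_one)

lemma add_in_O [intro]: "x \<in> \<O> \<Longrightarrow> y \<in> \<O> \<Longrightarrow> x + y \<in> \<O>"
  unfolding Ointeg_def using val_add[of x y] by (cases "x = 0"; cases "y = 0"; force)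

lemma mult_in_O [intro]: "x \<in> \<O> \<Longrightarrow> y \<in> \<O> \<Longrightarrow> x * y \<in> \<O>"
  unfolding Ointeg_def using val_mult[of x y] by (cases "x = 0"; cases "y = 0"; auto)

lemma uminus_in_O [intro]: "x \<in> \<O> \<Longrightarrow> - x \<in> \<O>"
  unfolding Ointeg_def using val_uminus[of x] by (cases "x = 0") auto

lemma diff_in_O [intro]: "x \<in> \<O> \<Longrightarrow> y \<in> \<O> \<Longrightarrow> x - y \<in> \<O>"
  using add_in_O[of x "- y"] by auto

lemma of_int_in_O [simp]: "of_int k \<in> \<O>"
proof (induction k rule: int_induct[where k = 0])
  case (step2 i)
  then show ?case using diff_in_O[of "of_int i" 1] by simp
qed auto

lemma sum_in_O: "(\<And>x. x \<in> S \<Longrightarrow> f x \<in> \<O>) \<Longrightarrow> sum f S \<in> \<O>"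
  by (induction S rule: infinite_finite_induct) auto

lemma prod_in_O: "(\<And>x. x \<in> S \<Longrightarrow> f x \<in> \<O>) \<Longrightarrow> prod f S \<in> \<O>"
  by (induction S rule: infinite_finite_induct) auto

lemma power_in_O: "x \<in> \<O> \<Longrightarrow> x ^ k \<in> \<O>"
  by (induction k) auto

lemma O_cases: "x \<in> \<O> \<Longrightarrow> x \<in> \<mm> \<or> x \<in> \<U>"
  unfolding Ointeg_def \<mm>_def \<U>_def by auto

lemma units_subset_O: "\<U> \<subseteq> \<O>"
  unfolding Ointeg_def \<U>_def by auto

lemma max_ideal_units_disjoint: "\<mm> \<inter> \<U> = {}"
  unfolding \<mm>_def \<U>_def by auto

lemma add_in_max_ideal: "x \<in> \<mm> \<Longrightarrow> y \<in> \<mm> \<Longrightarrow> x + y \<in> \<mm>"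
  unfolding \<mm>_def using val_add[of x y] by (cases "x = 0"; cases "y = 0"; cases "x + y = 0"; force)

lemma mult_in_max_ideal: "x \<in> \<mm> \<Longrightarrow> y \<in> \<O> \<Longrightarrow> x * y \<in> \<mm>"
  unfolding \<mm>_def Ointeg_def using val_mult[of x y] by (cases "x = 0"; cases "y = 0"; auto)

lemma uminus_in_max_ideal: "x \<in> \<mm> \<Longrightarrow> - x \<in> \<mm>"
  unfolding \<mm>_def using val_uminus[of x] by (cases "x = 0") auto

lemma diff_in_max_ideal: "x \<in> \<mm> \<Longrightarrow> y \<in> \<mm> \<Longrightarrow> x - y \<in> \<mm>"
  using add_in_max_ideal[of x "- y"] uminus_in_max_ideal[of y] by simp

lemma max_ideal_congruence_trans: "x - y \<in> \<mm> \<Longrightarrow> y - z \<in> \<mm> \<Longrightarrow> x - z \<in> \<mm>"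
  using add_in_max_ideal[of "x - y" "y - z"] by simp

lemma max_ideal_congruence_sym: "x - y \<in> \<mm> \<Longrightarrow> y - x \<in> \<mm>"
  using uminus_in_max_ideal[of "x - y"] by simp

lemma square_in_max_ideal: "x * x \<in> \<mm> \<Longrightarrow> x \<in> \<mm>"
  unfolding \<mm>_def using val_mult[of x x] by (cases "x = 0") auto

lemma one_in_units [simp]: "1 \<in> \<U>"
  unfolding \<U>_def by (simp add: val_one)

lemma mult_in_units: "x \<in> \<U> \<Longrightarrow> y \<in> \<U> \<Longrightarrow> x * y \<in> \<U>"
  unfolding \<U>_def using val_mult[of x y] by auto

lemma inverse_in_units: "x \<in> \<U> \<Longrightarrow> inverse x \<in> \<U>"
  unfolding \<U>_def using val_inverse[of x] by auto

lemma uminus_in_units: "x \<in> \<U> \<Longrightarrow> - x \<in> \<U>"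
  unfolding \<U>_def using val_uminus[of x] by auto

lemma power_in_units: "x \<in> \<U> \<Longrightarrow> x ^ k \<in> \<U>"
  by (induction k) (auto intro: mult_in_units)

lemma units_add_cases: "x \<in> \<O> \<Longrightarrow> y \<in> \<O> \<Longrightarrow> x + y \<in> \<U> \<Longrightarrow> x \<in> \<U> \<or> y \<in> \<U>"
  using O_cases[of x] O_cases[of y] add_in_max_ideal[of x y] max_ideal_units_disjoint by blast

lemma units_mult_cancel: "x \<in> \<O> \<Longrightarrow> y \<in> \<O> \<Longrightarrow> x * y \<in> \<U> \<Longrightarrow> x \<in> \<U>"
  using O_cases[of x] mult_in_max_ideal[of x y] max_ideal_units_disjoint by blast

lemma sigma_add: "\<sigma> (x + y) = \<sigma> x + \<sigma> y"
  and sigma_mult: "\<sigma> (x * y) = \<sigma> x * \<sigma> y"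
  and sigma_sigma [simp]: "\<sigma> (\<sigma> x) = x"
  using unram_quad unfolding unram_quad_ext_def by auto

lemma val_sigma: "x \<noteq> 0 \<Longrightarrow> v (\<sigma> x) = v x"
  using unram_quad unfolding unram_quad_ext_def by auto

sublocale sigma: field_hom \<sigma>
proof
  show "\<sigma> 1 = 1" using sigma_mult[of 1 "\<sigma> 1"] by simp
  show "\<sigma> 0 = 0" using sigma_add[of 0 0] by simp
qed (auto simp: sigma_add sigma_mult)

lemma sigma_in_O: "x \<in> \<O> \<Longrightarrow> \<sigma> x \<in> \<O>"
  unfolding Ointeg_def using val_sigma[of x] by (cases "x = 0") auto

lemma sigma_in_units: "x \<in> \<U> \<Longrightarrow> \<sigma> x \<in> \<U>"
  unfolding \<U>_def using val_sigma[of x] by auto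

lemma unit_of_norm_unit: "\<sigma> x * x \<in> \<U> \<Longrightarrow> x \<in> \<U>"
  unfolding \<U>_def using val_mult[of "\<sigma> x" x] val_sigma[of x] by (cases "x = 0") auto

lemma uniformizer: "\<exists>\<pi>. \<sigma> \<pi> = \<pi> \<and> \<pi> \<noteq> 0 \<and> v \<pi> = 1"
  using unram_quad unfolding unram_quad_ext_def fixed_field_def by auto

definition integral_mat :: "nat \<Rightarrow> 'e mat \<Rightarrow> bool" where
  "integral_mat n A \<longleftrightarrow> A \<in> carrier_mat n n \<and> (\<forall>i<n. \<forall>j<n. A $$ (i, j) \<in> \<O>)"

lemma integral_matI:
  "A \<in> carrier_mat n n \<Longrightarrow> (\<And>i j. i < n \<Longrightarrow> j < n \<Longrightarrow> A $$ (i, j) \<in> \<O>) \<Longrightarrow> integral_mat n A"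
  unfolding integral_mat_def by auto

lemma integral_matD:
  "integral_mat n A \<Longrightarrow> A \<in> carrier_mat n n"
  "integral_mat n A \<Longrightarrow> i < n \<Longrightarrow> j < n \<Longrightarrow> A $$ (i, j) \<in> \<O>"
  unfolding integral_mat_def by auto

lemma det_in_O:
  assumes A: "integral_mat n A"
  shows "det A \<in> \<O>"
  unfolding det_def'[OF integral_matD(1)[OF A]]
  using integral_matD(2)[OF A] by (auto intro!: sum_in_O prod_in_O mult_in_O simp: permutes_in_image)

lemma integral_mat_mult:
  assumes A: "integral_mat n A" and B: "integral_mat n B"
  shows "integral_mat n (A * B)"
proof (rule integral_matI)
  show "A * B \<in> carrier_mat n n" using integral_matD(1)[OF A] integral_matD(1)[OF B] by auto
  fix i j assume "i < n" "j < n"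
  then show "(A * B) $$ (i, j) \<in> \<O>"
    using integral_matD[OF A] integral_matD[OF B]
    by (auto simp: scalar_prod_def intro!: sum_in_O mult_in_O)
qed

lemma integral_mat_add: "integral_mat n A \<Longrightarrow> integral_mat n B \<Longrightarrow> integral_mat n (A + B)"
  unfolding integral_mat_def by (auto intro!: add_in_O)

lemma integral_mat_smult: "c \<in> \<O> \<Longrightarrow> integral_mat n A \<Longrightarrow> integral_mat n (c \<cdot>\<^sub>m A)"
  unfolding integral_mat_def by (auto intro!: mult_in_O)

lemma integral_mat_one: "integral_mat n (1\<^sub>m n)"
  unfolding integral_mat_def by auto

lemma integral_mat_pow: "integral_mat n A \<Longrightarrow> integral_mat n (A ^\<^sub>m k)"
  by (induction k) (auto intro: integral_mat_mult integral_mat_one dest: integral_matD(1))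

lemma integral_mat_poly_eval:
  assumes "integral_mat n A" "\<forall>i<n. c i \<in> \<O>"
  shows "integral_mat n (mat_poly_eval n c A)"
proof -
  have "set is \<subseteq> {0..<n} \<Longrightarrow> integral_mat n (foldr (\<lambda>i M. c i \<cdot>\<^sub>m (A ^\<^sub>m i) + M) is (0\<^sub>m n n))"
    for "is"
    by (induction "is")
      (use assms in \<open>auto intro!: integral_mat_add integral_mat_smult integral_mat_pow
        intro: integral_matI\<close>)
  then show ?thesis unfolding mat_poly_eval_def by auto
qed

lemma integral_mat_adj:
  assumes A: "integral_mat n A"
  shows "integral_mat n (adj_mat A)"
proof (rule integral_matI)
  note A' = integral_matD[OF A]
  show "adj_mat A \<in> carrier_mat n n" using adj_mat(1)[OF A'(1)] .
  fix i j assume ij: "i < n" "j < n"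
  have "integral_mat (n - 1) (mat_delete A j i)"
    using A'(1) ij by (auto simp: mat_delete_def intro!: integral_matI A'(2))
  then show "adj_mat A $$ (i, j) \<in> \<O>"
    using A'(1) ij by (auto simp: adj_mat_def cofactor_def intro!: mult_in_O power_in_O det_in_O)
qed

lemma GL_over_O_iff: "A \<in> GL_over n \<O> \<longleftrightarrow> integral_mat n A \<and> det A \<in> \<U>"
proof
  assume A: "A \<in> GL_over n \<O>"
  then have G: "A \<in> GL n" and int: "integral_mat n A" "integral_mat n (minv n A)"
    unfolding GL_over_def integral_mat_def using GL_D by auto
  have "det A * det (minv n A) = 1" using det_mult[OF GL_D(1,2)[OF G]] GL_D(3)[OF G] by simp
  then show "integral_mat n A \<and> det A \<in> \<U>"
    using int units_mult_cancel[OF det_in_O det_in_O] by auto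
next
  assume A: "integral_mat n A \<and> det A \<in> \<U>"
  then have "A \<in> carrier_mat n n" "det A \<noteq> 0" unfolding \<U>_def by (auto dest: integral_matD)
  note inv = det_nonzero_GL[OF this]
  have "integral_mat n (minv n A)"
    unfolding inv(2) using A units_subset_O inverse_in_units
    by (auto intro!: integral_mat_smult integral_mat_adj)
  then show "A \<in> GL_over n \<O>"
    using inv(1) A unfolding GL_over_def integral_mat_def by auto
qed

lemma GL_over_O_GL: "A \<in> GL_over n \<O> \<Longrightarrow> A \<in> GL n"
  unfolding GL_over_def by auto

lemma GL_over_O_mult: "A \<in> GL_over n \<O> \<Longrightarrow> B \<in> GL_over n \<O> \<Longrightarrow> A * B \<in> GL_over n \<O>"
  unfolding GL_over_O_iff
  using det_mult[of A n B] integral_matD(1)[of n A] integral_matD(1)[of n B]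
  by (auto intro: integral_mat_mult mult_in_units)

lemma GL_over_O_minv:
  assumes A: "A \<in> GL_over n \<O>"
  shows "minv n A \<in> GL_over n \<O>"
proof -
  have "det (minv n A) \<in> \<U>"
    using det_minv[OF GL_over_O_GL[OF A]] A inverse_in_units unfolding GL_over_O_iff by simp
  moreover have "integral_mat n (minv n A)"
    using A GL_D(2)[OF GL_over_O_GL[OF A]] unfolding GL_over_def by (auto intro: integral_matI)
  ultimately show ?thesis unfolding GL_over_O_iff by simp
qed

lemma mbar_carrier: "A \<in> carrier_mat n m \<Longrightarrow> mbar \<sigma> A \<in> carrier_mat n m"
  unfolding mbar_def by auto

lemma mbar_mult:
  "A \<in> carrier_mat n k \<Longrightarrow> B \<in> carrier_mat k m \<Longrightarrow> mbar \<sigma> (A * B) = mbar \<sigma> A * mbar \<sigma> B"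
  unfolding mbar_def by (rule sigma.mat_hom_mult)

lemma mbar_add:
  "A \<in> carrier_mat n m \<Longrightarrow> B \<in> carrier_mat n m \<Longrightarrow> mbar \<sigma> (A + B) = mbar \<sigma> A + mbar \<sigma> B"
  unfolding mbar_def by (rule eq_matI) (auto simp: sigma_add)

lemma mbar_one: "mbar \<sigma> (1\<^sub>m n) = 1\<^sub>m n"
  unfolding mbar_def by (rule sigma.mat_hom_one)

lemma mbar_mbar [simp]: "mbar \<sigma> (mbar \<sigma> A) = A"
  unfolding mbar_def by (rule eq_matI) auto

lemma det_mbar: "det (mbar \<sigma> A) = \<sigma> (det A)"
  unfolding mbar_def by (rule sigma.hom_det)

lemma mbar_GL:
  assumes "A \<in> GL n"
  shows "mbar \<sigma> A \<in> GL n" "minv n (mbar \<sigma> A) = mbar \<sigma> (minv n A)"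
proof -
  note A = GL_D[OF assms]
  have "mbar \<sigma> A * mbar \<sigma> (minv n A) = 1\<^sub>m n"
    using mbar_mult[OF A(1,2)] A(3) mbar_one by simp
  from right_inverse_GL[OF mbar_carrier[OF A(1)] mbar_carrier[OF A(2)] this]
  show "mbar \<sigma> A \<in> GL n" "minv n (mbar \<sigma> A) = mbar \<sigma> (minv n A)" by auto
qed

lemma integral_mat_mbar: "integral_mat n A \<Longrightarrow> integral_mat n (mbar \<sigma> A)"
  unfolding integral_mat_def mbar_def by (auto intro!: sigma_in_O)

lemma mbar_GL_over_O: "A \<in> GL_over n \<O> \<Longrightarrow> mbar \<sigma> A \<in> GL_over n \<O>"
  unfolding GL_over_O_iff det_mbar by (auto intro: integral_mat_mbar sigma_in_units)

lemma mbar_fixed_GL_over_fixed_field: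
  assumes A: "A \<in> GL n" and fixed: "mbar \<sigma> A = A"
  shows "A \<in> GL_over n (fixed_field \<sigma>)"
proof -
  have fixed_entries: "B $$ (i, j) \<in> fixed_field \<sigma>"
    if "mbar \<sigma> B = B" "B \<in> carrier_mat n n" "i < n" "j < n" for B i j
  proof -
    have "\<sigma> (B $$ (i, j)) = mbar \<sigma> B $$ (i, j)" using that(2-4) unfolding mbar_def by auto
    then show ?thesis using that(1) unfolding fixed_field_def by simp
  qed
  have "mbar \<sigma> (minv n A) = minv n A" using mbar_GL(2)[OF A] fixed by simp
  then show ?thesis
    using A fixed fixed_entries GL_D(1,2)[OF A] unfolding GL_over_def by auto
qed

lemma det_mstar: "A \<in> carrier_mat n n \<Longrightarrow> det (mstar \<sigma> A) = \<sigma> (det A)"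
  unfolding mstar_def using det_transpose[of "map_mat \<sigma> A" n] sigma.hom_det by auto

section \<open>The Kottwitz condition\<close>

lemma conj_GL_over_O_of_poly:
  assumes \<gamma>: "\<gamma> \<in> GL n" and N: "N \<in> carrier_mat n n"
    and det_N: "det N = \<sigma> (det \<gamma>) * det \<gamma>"
    and c: "\<forall>i<n. c i \<in> \<O>" and \<gamma>_poly: "\<gamma> = mat_poly_eval n c N"
    and g: "g \<in> GL n" and gNg: "minv n g * N * g \<in> GL_over n \<O>"
  shows "minv n g * \<gamma> * g \<in> GL_over n \<O>"
proof -
  have "integral_mat n (minv n g * \<gamma> * g)"
    using gNg integral_mat_poly_eval[OF _ c] conj_mat_poly_eval[OF g N]
    unfolding \<gamma>_poly GL_over_O_iff by simp
  moreover have "det (minv n g * \<gamma> * g) \<in> \<U>"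
    using gNg det_N unit_of_norm_unit[of "det \<gamma>"]
    unfolding GL_over_O_iff det_conj[OF g N] det_conj[OF g GL_D(1)[OF \<gamma>]] by simp
  ultimately show ?thesis unfolding GL_over_O_iff by simp
qed

lemma kottwitz_conj_GL_over_O:
  assumes \<gamma>: "\<gamma> \<in> GL n" "kottwitz n v \<sigma> \<gamma>"
    and g: "g \<in> GL n" "minv n g * (mbar \<sigma> \<gamma> * \<gamma>) * g \<in> GL_over n \<O>"
  shows "minv n g * \<gamma> * g \<in> GL_over n \<O>"
proof -
  note \<gamma>' = GL_D(1)[OF \<gamma>(1)]
  obtain c where c: "\<forall>i<n. c i \<in> \<O>" "\<gamma> = mat_poly_eval n c (mbar \<sigma> \<gamma> * \<gamma>)"
    using \<gamma>(2) g unfolding kottwitz_def by blast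
  have "det (mbar \<sigma> \<gamma> * \<gamma>) = \<sigma> (det \<gamma>) * det \<gamma>"
    using det_mult[OF mbar_carrier[OF \<gamma>'] \<gamma>'] det_mbar by simp
  from conj_GL_over_O_of_poly[OF \<gamma>(1) _ this c g] show ?thesis
    using mbar_carrier[OF \<gamma>'] \<gamma>' by auto
qed

lemma kottwitz_wrt_conj_GL_over_O:
  assumes \<beta>: "\<beta> \<in> GL n" and \<zeta>: "\<zeta> \<in> GL n" "kottwitz_wrt n v \<sigma> \<beta> \<zeta>"
    and h: "h \<in> unitary_group n \<sigma> \<beta>"
      "minv n h * (minv n \<beta> * mstar \<sigma> \<zeta> * \<beta> * \<zeta>) * h \<in> GL_over n \<O>"
  shows "minv n h * \<zeta> * h \<in> GL_over n \<O>"
proof -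
  let ?N = "minv n \<beta> * mstar \<sigma> \<zeta> * \<beta> * \<zeta>"
  note \<beta>' = GL_D[OF \<beta>] and \<zeta>' = GL_D[OF \<zeta>(1)]
  have mstar: "mstar \<sigma> \<zeta> \<in> carrier_mat n n" using \<zeta>'(1) unfolding mstar_def by auto
  obtain c where c: "\<forall>i<n. c i \<in> \<O>" "\<zeta> = mat_poly_eval n c ?N"
    using \<zeta>(2) h unfolding kottwitz_wrt_def Let_def by blast
  have "det ?N = \<sigma> (det \<zeta>) * det \<zeta>"
    using \<beta>' \<zeta>' mstar det_minv[OF \<beta>] det_mstar[OF \<zeta>'(1)]
    by (simp add: det_mult[of _ n] mult_sq_carrier_mat field_simps)
  moreover have "?N \<in> carrier_mat n n" using \<beta>' \<zeta>' mstar by auto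
  moreover have "h \<in> GL n" using h(1) unfolding unitary_group_def by auto
  ultimately show ?thesis using conj_GL_over_O_of_poly[OF \<zeta>(1) _ _ c _ h(2)] by blast
qed

section \<open>The residue field extension\<close>

lemma surj_mod_max_ideal_if_inj_mod_max_ideal:
  assumes A: "A \<subseteq> \<O>" and f: "f ` A \<subseteq> A"
    and inj: "\<And>a b. a \<in> A \<Longrightarrow> b \<in> A \<Longrightarrow> f a - f b \<in> \<mm> \<Longrightarrow> a - b \<in> \<mm>"
    and y: "y \<in> A"
  shows "\<exists>x\<in>A. f x - y \<in> \<mm>"
proof -
  obtain S where S: "finite S" "\<forall>x\<in>\<O>. \<exists>s\<in>S. x - s \<in> \<mm>"
    using local_field unfolding nonarch_local_field_def \<mm>_def by fastforce
  define rep where "rep x = (SOME s. s \<in> S \<and> x - s \<in> \<mm>)" for x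
  have rep: "rep x \<in> S" "x - rep x \<in> \<mm>" if "x \<in> \<O>" for x
    using someI_ex[of "\<lambda>s. s \<in> S \<and> x - s \<in> \<mm>"] S(2) that unfolding rep_def by auto
  have rep_eq: "rep x = rep y" if "x - y \<in> \<mm>" for x y
  proof -
    have "(\<lambda>s. s \<in> S \<and> x - s \<in> \<mm>) = (\<lambda>s. s \<in> S \<and> y - s \<in> \<mm>)"
      using that max_ideal_congruence_trans max_ideal_congruence_sym by blast
    then show ?thesis unfolding rep_def by simp
  qed
  define T where "T = rep ` A"
  have "finite T" unfolding T_def using rep(1) A S(1) by (auto intro: finite_subset)
  define pick where "pick s = (SOME a. a \<in> A \<and> rep a = s)" for s
  have pick: "pick s \<in> A" "rep (pick s) = s" if "s \<in> T" for s
    using that someI_ex[of "\<lambda>a. a \<in> A \<and> rep a = s"] unfolding T_def pick_def by auto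
  define \<phi> where "\<phi> s = rep (f (pick s))" for s
  have "\<phi> ` T \<subseteq> T" unfolding \<phi>_def T_def using pick(1) f T_def by auto
  moreover have "inj_on \<phi> T"
  proof (rule inj_onI)
    fix s t assume st: "s \<in> T" "t \<in> T" "\<phi> s = \<phi> t"
    then have "f (pick s) - f (pick t) \<in> \<mm>"
      using rep(2) pick(1) f A max_ideal_congruence_trans max_ideal_congruence_sym
      unfolding \<phi>_def by (metis image_subset_iff subsetD)
    then show "s = t" using inj pick st rep_eq by metis
  qed
  ultimately have "\<phi> ` T = T" using endo_inj_surj \<open>finite T\<close> by blast
  moreover have "rep y \<in> T" unfolding T_def using y by simp
  ultimately obtain s where s: "s \<in> T" "\<phi> s = rep y" by (metis imageE)
  have "f (pick s) - rep (f (pick s)) \<in> \<mm>" "y - rep y \<in> \<mm>"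
    using rep(2) pick(1)[OF s(1)] f A y by auto
  then have "f (pick s) - y \<in> \<mm>"
    using s(2) max_ideal_congruence_trans max_ideal_congruence_sym unfolding \<phi>_def by metis
  then show ?thesis using pick(1)[OF s(1)] by blast
qed

lemma exists_fixed_sqrt_mod_max_ideal:
  assumes two: "2 \<in> \<mm>" and N: "\<sigma> N = N" "N \<in> \<O>"
  shows "\<exists>r. \<sigma> r = r \<and> r \<in> \<O> \<and> r * r - N \<in> \<mm>"
proof -
  let ?A = "{x. \<sigma> x = x \<and> x \<in> \<O>}"
  have "\<exists>r\<in>?A. r * r - N \<in> \<mm>"
  proof (rule surj_mod_max_ideal_if_inj_mod_max_ideal)
    fix a b assume ab: "a \<in> ?A" "b \<in> ?A" "a * a - b * b \<in> \<mm>"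
    have "2 * (b * (a - b)) \<in> \<mm>" using two ab by (auto intro!: mult_in_max_ideal)
    with ab(3) have "(a * a - b * b) - 2 * (b * (a - b)) \<in> \<mm>" by (rule diff_in_max_ideal)
    moreover have "(a * a - b * b) - 2 * (b * (a - b)) = (a - b) * (a - b)"
      by (simp add: algebra_simps)
    ultimately show "a - b \<in> \<mm>" using square_in_max_ideal by metis
  qed (use N in \<open>auto simp: sigma_mult\<close>)
  then show ?thesis by auto
qed

lemma fixed_approximation:
  assumes fixed_residues: "\<forall>x\<in>\<O>. \<exists>f. \<sigma> f = f \<and> f \<in> \<O> \<and> x - f \<in> \<mm>"
    and \<pi>: "\<sigma> \<pi> = \<pi>" "\<pi> \<noteq> 0" "v \<pi> = 1" and y: "y \<in> \<O>"
  shows "\<exists>s z. \<sigma> s = s \<and> z \<in> \<O> \<and> y = s + \<pi> ^ k * z"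
proof (induction k)
  case 0
  show ?case using y by (intro exI[of _ 0] exI[of _ y]) auto
next
  case (Suc k)
  then obtain s z where sz: "\<sigma> s = s" "z \<in> \<O>" "y = s + \<pi> ^ k * z" by auto
  obtain f where f: "\<sigma> f = f" "f \<in> \<O>" "z - f \<in> \<mm>" using fixed_residues sz(2) by auto
  define z' where "z' = (z - f) * inverse \<pi>"
  have "z' \<in> \<O>"
    using f(3) val_mult[of "z - f" "inverse \<pi>"] val_inverse[OF \<pi>(2)] \<pi>
    unfolding z'_def \<mm>_def Ointeg_def by (cases "z = f") auto
  moreover have "y = (s + \<pi> ^ k * f) + \<pi> ^ Suc k * z'"
    using sz(3) \<pi>(2) unfolding z'_def by (simp add: field_simps)
  moreover have "\<sigma> (s + \<pi> ^ k * f) = s + \<pi> ^ k * f"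
    using sz(1) f(1) \<pi>(1) by (simp add: sigma_add sigma_mult sigma.hom_power)
  ultimately show ?case by blast
qed

lemma exists_residue_not_fixed: "\<exists>x\<in>\<O>. \<forall>f. \<sigma> f = f \<longrightarrow> f \<in> \<O> \<longrightarrow> x - f \<notin> \<mm>"
proof (rule ccontr)
  assume "\<not> ?thesis"
  then have fixed_residues: "\<forall>x\<in>\<O>. \<exists>f. \<sigma> f = f \<and> f \<in> \<O> \<and> x - f \<in> \<mm>" by auto
  obtain \<pi> where \<pi>: "\<sigma> \<pi> = \<pi>" "\<pi> \<noteq> 0" "v \<pi> = 1" using uniformizer by auto
  have \<pi>_pow: "\<pi> ^ k \<noteq> 0" "\<sigma> (\<pi> ^ k) = \<pi> ^ k" "v (\<pi> ^ k) = int k" for k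
    using \<pi> val_power[OF \<pi>(2), of k] by (auto simp: sigma.hom_power)
  obtain y0 where y0: "\<sigma> y0 \<noteq> y0" using unram_quad unfolding unram_quad_ext_def by auto
  then have "y0 \<noteq> 0" by auto
  define y where "y = y0 * \<pi> ^ nat (- v y0)"
  have y: "\<sigma> y \<noteq> y" "y \<in> \<O>"
    using y0 \<pi>_pow val_mult[OF \<open>y0 \<noteq> 0\<close> \<pi>_pow(1)]
    unfolding y_def Ointeg_def by (auto simp: sigma_mult)
  define K where "K = Suc (nat (v (\<sigma> y - y)))"
  obtain s z where sz: "\<sigma> s = s" "z \<in> \<O>" "y = s + \<pi> ^ K * z"
    using fixed_approximation[OF fixed_residues \<pi> y(2)] by blast
  have "\<sigma> y - y = \<pi> ^ K * (\<sigma> z - z)"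
    using sz \<pi>_pow(2)[of K] by (simp add: sigma_add sigma_mult algebra_simps)
  moreover have "\<sigma> z - z \<in> \<O>" using sz(2) sigma_in_O by auto
  moreover have "\<sigma> z - z \<noteq> 0" using y(1) calculation(1) by auto
  ultimately have "v (\<sigma> y - y) = int K + v (\<sigma> z - z)" "0 \<le> v (\<sigma> z - z)"
    using y(1) val_mult[OF \<pi>_pow(1)[of K], of "\<sigma> z - z"] \<pi>_pow(3)[of K]
    unfolding Ointeg_def by auto
  then show False unfolding K_def by linarith
qed

lemma exists_unit_sigma_difference: "\<exists>\<alpha>\<in>\<O>. \<alpha> - \<sigma> \<alpha> \<in> \<U>"
proof -
  obtain x where x: "x \<in> \<O>" and not_fixed: "\<forall>f. \<sigma> f = f \<longrightarrow> f \<in> \<O> \<longrightarrow> x - f \<notin> \<mm>"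
    using exists_residue_not_fixed by auto
  have \<sigma>x: "\<sigma> x \<in> \<O>" using sigma_in_O[OF x] .
  have "x - \<sigma> x \<notin> \<mm>"
  proof
    assume x_congr: "x - \<sigma> x \<in> \<mm>"
    have two: "(2::'e) \<in> \<O>" using add_in_O[OF one_in_O one_in_O] by (simp add: one_add_one)
    show False
    proof (cases "(2::'e) \<in> \<U>")
      case True
      define f where "f = (x + \<sigma> x) * inverse 2"
      have "\<sigma> f = f"
        unfolding f_def sigma_mult sigma.hom_inverse sigma_add
        by (simp add: sigma.hom_numeral add.commute)
      moreover have "f \<in> \<O>"
        unfolding f_def using x \<sigma>x inverse_in_units[OF True] units_subset_O
        by (intro mult_in_O add_in_O) auto
      moreover have "x - f \<in> \<mm>"
      proof -
        have "x - f = (x - \<sigma> x) * inverse 2" unfolding f_def by (simp add: field_simps)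
        moreover have "inverse 2 \<in> \<O>" using inverse_in_units[OF True] units_subset_O by auto
        ultimately show ?thesis using mult_in_max_ideal[OF x_congr] by metis
      qed
      ultimately show False using not_fixed by auto
    next
      case False
      then have two_m: "2 \<in> \<mm>" using O_cases[OF two] by auto
      \<comment> \<open>In residue characteristic 2, x + \<sigma> x lies in \<mm>, so x^2 is congruent to -x \<sigma> x;
        a \<sigma>-fixed square root of the latter modulo \<mm> is then congruent to x.\<close>
      define N where "N = x * \<sigma> x"
      have "\<sigma> (- N) = - N" "- N \<in> \<O>"
        unfolding N_def using x \<sigma>x by (auto simp: sigma.hom_uminus sigma_mult mult.commute)
      then obtain r where r: "\<sigma> r = r" "r \<in> \<O>" "r * r + N \<in> \<mm>"
        using exists_fixed_sqrt_mod_max_ideal[OF two_m] by fastforce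
      have "2 * x - (x - \<sigma> x) \<in> \<mm>"
        using diff_in_max_ideal[OF mult_in_max_ideal[OF two_m x] x_congr] .
      then have "x * x + N \<in> \<mm>"
        using mult_in_max_ideal[of "x + \<sigma> x" x] x unfolding N_def by (simp add: algebra_simps)
      moreover have "2 * (N + x * r) \<in> \<mm>"
        using two_m x \<sigma>x r(2) unfolding N_def by (intro mult_in_max_ideal) auto
      ultimately have "(x * x + N) + (r * r + N) - 2 * (N + x * r) \<in> \<mm>"
        using r(3) by (metis diff_in_max_ideal add_in_max_ideal)
      moreover have "(x * x + N) + (r * r + N) - 2 * (N + x * r) = (x - r) * (x - r)"
        by (simp add: algebra_simps)
      ultimately have "x - r \<in> \<mm>" using square_in_max_ideal by metis
      then show False using not_fixed r by auto
    qed
  qed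
  then show ?thesis using x \<sigma>x O_cases by blast
qed

section \<open>Lang's theorem over the valuation ring\<close>

lemma det_row_lincomb:
  fixes F :: "nat \<Rightarrow> 'a::comm_ring_1 vec"
  assumes k: "k < n" and F: "\<forall>j<n. F j \<in> carrier_vec n"
    and U: "U \<in> carrier_vec n" and W: "W \<in> carrier_vec n"
  shows "det (mat\<^sub>r n n (F(k := a \<cdot>\<^sub>v U + b \<cdot>\<^sub>v W)))
       = a * det (mat\<^sub>r n n (F(k := U))) + b * det (mat\<^sub>r n n (F(k := W)))"
proof -
  have scale: "det (mat\<^sub>r n n (F(k := c \<cdot>\<^sub>v X))) = c * det (mat\<^sub>r n n (F(k := X)))"
    if X: "X \<in> carrier_vec n" for c X
  proof -
    have "mat\<^sub>r n n (F(k := c \<cdot>\<^sub>v X)) = mat\<^sub>r n n (\<lambda>j. (if j = k then c else 1) \<cdot>\<^sub>v (F(k := X)) j)"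
      by (intro arg_cong[where f = "mat\<^sub>r n n"]) auto
    also have "det \<dots> = (\<Prod>j = 0..<n. if j = k then c else 1) * det (mat\<^sub>r n n (F(k := X)))"
      by (rule det_rows_mul) (use F X in auto)
    finally show ?thesis using k by (simp add: prod.delta fun_upd_def)
  qed
  have "det (mat\<^sub>r n n (F(k := a \<cdot>\<^sub>v U + b \<cdot>\<^sub>v W)))
      = det (mat\<^sub>r n n (F(k := a \<cdot>\<^sub>v U))) + det (mat\<^sub>r n n (F(k := b \<cdot>\<^sub>v W)))"
    using det_row_add[of "\<lambda>_. a \<cdot>\<^sub>v U" k n "\<lambda>_. b \<cdot>\<^sub>v W" F] k F U W
    by (simp add: fun_upd_def)
  then show ?thesis using scale U W by simp
qed

lemma mbar_mat_diag: "mbar \<sigma> (mat_diag n x) = mat_diag n (\<lambda>j. \<sigma> (x j))"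
  unfolding mbar_def mat_diag_def by (rule eq_matI) auto

lemma exists_unit_det_diag_twist:
  assumes \<alpha>: "\<alpha> \<in> \<O>" "\<alpha> - \<sigma> \<alpha> \<in> \<U>" and c: "integral_mat n c"
  shows "\<exists>x. (\<forall>j. x j \<in> {1, \<alpha>}) \<and> det (mat_diag n x + c * mbar \<sigma> (mat_diag n x)) \<in> \<U>"
proof -
  define D where "D = \<sigma> \<alpha> - \<alpha>"
  have D: "D \<in> \<U>" using uminus_in_units[OF \<alpha>(2)] unfolding D_def by simp
  define column where "column x j = x j \<cdot>\<^sub>v unit_vec n j + \<sigma> (x j) \<cdot>\<^sub>v col c j" for x j
  define rows where "rows x k = (\<lambda>j. if j < k then column x j else D \<cdot>\<^sub>v unit_vec n j)" for x k
  have c_carrier: "c \<in> carrier_mat n n" using integral_matD(1)[OF c] .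
  have rows_carrier: "\<forall>j<n. rows x k j \<in> carrier_vec n" for x k
    unfolding rows_def column_def using c_carrier by auto
  have x_O: "x j \<in> \<O>" "\<sigma> (x j) \<in> \<O>" if "\<forall>j. x j \<in> {1, \<alpha>}" for x j
    using that[rule_format, of j] \<alpha>(1) sigma_in_O by auto
  have integral_rows: "integral_mat n (mat\<^sub>r n n (rows x k))" if "\<forall>j. x j \<in> {1, \<alpha>}" for x k
    using x_O[OF that] integral_matD(2)[OF c] c_carrier D units_subset_O
    by (intro integral_matI) (auto simp: rows_def column_def intro!: add_in_O mult_in_O)
  \<comment> \<open>The rows are the columns of the matrix in the claim. Row k of rows x k, namely D e_k, is
    \<sigma> \<alpha> times column k for x k = 1 minus column k for x k = \<alpha>; by linearity of det in that row
    one of the two choices keeps the determinant a unit.\<close>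
  have "k \<le> n \<Longrightarrow> \<exists>x. (\<forall>j. x j \<in> {1, \<alpha>}) \<and> det (mat\<^sub>r n n (rows x k)) \<in> \<U>" for k
  proof (induction k)
    case 0
    have "mat\<^sub>r n n (rows (\<lambda>_. 1) 0) = D \<cdot>\<^sub>m 1\<^sub>m n" unfolding rows_def by (rule eq_matI) auto
    then show ?case using power_in_units[OF D, of n] by (intro exI[of _ "\<lambda>_. 1"]) auto
  next
    case (Suc k)
    then obtain x where x: "\<forall>j. x j \<in> {1, \<alpha>}" "det (mat\<^sub>r n n (rows x k)) \<in> \<U>" by auto
    let ?x1 = "x(k := 1)" and ?x\<alpha> = "x(k := \<alpha>)"
    have x': "\<forall>j. ?x1 j \<in> {1, \<alpha>}" "\<forall>j. ?x\<alpha> j \<in> {1, \<alpha>}" using x(1) by auto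
    have "\<sigma> \<alpha> \<cdot>\<^sub>v column ?x1 k + (- 1) \<cdot>\<^sub>v column ?x\<alpha> k = rows x k k"
      unfolding rows_def column_def D_def using Suc.prems c_carrier
      by (auto intro!: eq_vecI simp: algebra_simps)
    then have upd: "rows x k = (rows x k)(k := \<sigma> \<alpha> \<cdot>\<^sub>v column ?x1 k + (- 1) \<cdot>\<^sub>v column ?x\<alpha> k)"
      by simp
    have upd': "(rows x k)(k := column ?x1 k) = rows ?x1 (Suc k)"
      "(rows x k)(k := column ?x\<alpha> k) = rows ?x\<alpha> (Suc k)"
      unfolding rows_def column_def by auto
    have "column y k \<in> carrier_vec n" for y unfolding column_def using c_carrier by auto
    then have "det (mat\<^sub>r n n (rows x k)) = \<sigma> \<alpha> * det (mat\<^sub>r n n (rows ?x1 (Suc k)))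
        + (- 1) * det (mat\<^sub>r n n (rows ?x\<alpha> (Suc k)))"
      using Suc.prems unfolding upd'[symmetric]
      by (subst upd) (simp add: det_row_lincomb rows_carrier)
    then have "det (mat\<^sub>r n n (rows ?x1 (Suc k))) \<in> \<U> \<or> det (mat\<^sub>r n n (rows ?x\<alpha> (Suc k))) \<in> \<U>"
      using x(2) units_add_cases units_mult_cancel det_in_O[OF integral_rows] x' sigma_in_O[OF \<alpha>(1)]
      by (metis mult.commute uminus_in_O one_in_O mult_in_O)
    then show ?case using x' by blast
  qed
  then obtain x where x: "\<forall>j. x j \<in> {1, \<alpha>}" "det (mat\<^sub>r n n (rows x n)) \<in> \<U>" by auto
  have "transpose_mat (mat_diag n x + c * mbar \<sigma> (mat_diag n x)) = mat\<^sub>r n n (rows x n)"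
    unfolding mbar_mat_diag mat_diag_mult_right[OF c_carrier] rows_def column_def
    using c_carrier by (intro eq_matI) (auto simp: mat_diag_def)
  then show ?thesis
    using x det_transpose[of "mat_diag n x + c * mbar \<sigma> (mat_diag n x)" n] c_carrier mbar_carrier
    by (metis add_carrier_mat mat_diag_dim mult_carrier_mat)
qed

lemma lang_GL_over_O:
  assumes c: "c \<in> GL_over n \<O>" "c * mbar \<sigma> c = 1\<^sub>m n"
  shows "\<exists>b\<in>GL_over n \<O>. c * mbar \<sigma> b = b"
proof -
  have c_int: "integral_mat n c" and c_carrier: "c \<in> carrier_mat n n"
    using c(1) integral_matD(1) unfolding GL_over_O_iff by auto
  obtain \<alpha> where \<alpha>: "\<alpha> \<in> \<O>" "\<alpha> - \<sigma> \<alpha> \<in> \<U>" using exists_unit_sigma_difference by auto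
  obtain x where x: "\<forall>j. x j \<in> {1, \<alpha>}" and det_b: "det (mat_diag n x + c * mbar \<sigma> (mat_diag n x)) \<in> \<U>"
    using exists_unit_det_diag_twist[OF \<alpha> c_int] by auto
  define X where "X = mat_diag n x"
  define b where "b = X + c * mbar \<sigma> X"
  have X: "X \<in> carrier_mat n n" "mbar \<sigma> X \<in> carrier_mat n n"
    unfolding X_def using mbar_carrier by auto
  have "x j \<in> \<O>" for j using x[rule_format, of j] \<alpha>(1) by auto
  then have "integral_mat n X" unfolding X_def mat_diag_def by (intro integral_matI) auto
  then have "integral_mat n b"
    unfolding b_def by (intro integral_mat_add integral_mat_mult integral_mat_mbar c_int)
  then have "b \<in> GL_over n \<O>" using det_b unfolding GL_over_O_iff b_def X_def by simp
  moreover have "c * mbar \<sigma> b = c * mbar \<sigma> X + (c * mbar \<sigma> c) * X"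
    unfolding b_def using X c_carrier mbar_carrier[OF c_carrier]
    by (simp add: mbar_add[of _ n n] mbar_mult[of _ n n _ n] mult_add_distrib_mat[of _ n n _ n]
        mult_assoc_sq_mat[of _ n])
  then have "c * mbar \<sigma> b = b"
    unfolding c(2) b_def using X c_carrier by (simp add: comm_add_mat[of _ n n])
  ultimately show ?thesis by blast
qed

lemma GL_over_fixed_GL_over_O_decomposition:
  assumes g: "g \<in> GL n" and c: "minv n g * mbar \<sigma> g \<in> GL_over n \<O>"
  shows "\<exists>a\<in>GL_over n (fixed_field \<sigma>). \<exists>b\<in>GL_over n \<O>. g = a * b"
proof -
  note g' = GL_D[OF g] and g_bar = GL_D[OF mbar_GL(1)[OF g]]
  have "(minv n g * mbar \<sigma> g) * mbar \<sigma> (minv n g * mbar \<sigma> g) = 1\<^sub>m n"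
    using g' g_bar by (simp add: mbar_mult[of _ n n _ n] mult_sq_carrier_mat mbar_GL(2)[OF g, symmetric] mult_assoc_sq_mat[of _ n]
        GL_cancel[OF mbar_GL(1)[OF g]])
  then obtain b where b: "b \<in> GL_over n \<O>" "minv n g * mbar \<sigma> g * mbar \<sigma> b = b"
    using lang_GL_over_O[OF c] by blast
  note b' = GL_D[OF GL_over_O_GL[OF b(1)]]
  define a where "a = g * b"
  have "mbar \<sigma> a = mbar \<sigma> g * mbar \<sigma> b" unfolding a_def using g' b' by (simp add: mbar_mult)
  also have "\<dots> = g * (minv n g * mbar \<sigma> g * mbar \<sigma> b)"
    using g' g_bar mbar_carrier[OF b'(1)]
    by (simp add: mult_assoc_sq_mat[of _ n] mult_sq_carrier_mat GL_cancel[OF g])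
  also have "\<dots> = a" unfolding b(2) a_def ..
  finally have "a \<in> GL_over n (fixed_field \<sigma>)"
    using mbar_fixed_GL_over_fixed_field GL_mult(1)[OF g GL_over_O_GL[OF b(1)]] unfolding a_def by blast
  moreover have "g = a * minv n b"
    unfolding a_def using g' b' by (simp add: mult_assoc_sq_mat[of _ n])
  ultimately show ?thesis using GL_over_O_minv[OF b(1)] by blast
qed

lemma kottwitz_twisted_conj_decomposition:
  assumes \<gamma>: "\<gamma> \<in> GL n" "kottwitz n v \<sigma> \<gamma>"
    and g: "g \<in> GL n" and k: "minv n g * \<gamma> * mbar \<sigma> g \<in> GL_over n \<O>"
  shows "\<exists>a\<in>GL_over n (fixed_field \<sigma>). \<exists>b\<in>GL_over n \<O>. g = a * b"
proof -
  have g_bar: "mbar \<sigma> g \<in> GL n" using mbar_GL(1)[OF g] .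
  note g' = GL_D[OF g] and g_bar' = GL_D[OF g_bar] and \<gamma>' = GL_D[OF \<gamma>(1)]
  have \<gamma>_bar: "mbar \<sigma> \<gamma> \<in> carrier_mat n n" using mbar_carrier[OF \<gamma>'(1)] .
  have "mbar \<sigma> (minv n g * \<gamma> * mbar \<sigma> g) * (minv n g * \<gamma> * mbar \<sigma> g)
      = minv n (mbar \<sigma> g) * (mbar \<sigma> \<gamma> * \<gamma>) * mbar \<sigma> g"
    using g' g_bar' \<gamma>' \<gamma>_bar
    by (simp add: mbar_mult[of _ n n _ n] mult_sq_carrier_mat mbar_GL(2)[OF g] mult_assoc_sq_mat[of _ n]
        GL_cancel[OF g])
  then have "minv n (mbar \<sigma> g) * (mbar \<sigma> \<gamma> * \<gamma>) * mbar \<sigma> g \<in> GL_over n \<O>"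
    using GL_over_O_mult[OF mbar_GL_over_O[OF k] k] by simp
  then have conj: "minv n (mbar \<sigma> g) * \<gamma> * mbar \<sigma> g \<in> GL_over n \<O>"
    using kottwitz_conj_GL_over_O[OF \<gamma> g_bar] by blast
  have "(minv n g * \<gamma> * mbar \<sigma> g) * minv n (minv n (mbar \<sigma> g) * \<gamma> * mbar \<sigma> g)
      = minv n g * mbar \<sigma> g"
    unfolding minv_conj[OF g_bar \<gamma>(1)] using g' g_bar' \<gamma>'
    by (simp add: mult_assoc_sq_mat[of _ n] GL_cancel[OF g_bar] GL_cancel[OF \<gamma>(1)])
  then have "minv n g * mbar \<sigma> g \<in> GL_over n \<O>"
    using GL_over_O_mult[OF k GL_over_O_minv[OF conj]] by simp
  then show ?thesis by (rule GL_over_fixed_GL_over_O_decomposition[OF g])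
qed

end

theorem mainTheorem8:
  fixes v :: "'e::field_char_0 \<Rightarrow> int" and \<sigma> :: "'e \<Rightarrow> 'e"
    and n :: nat and \<beta> \<gamma> \<zeta> :: "'e mat"
  assumes ext: "unram_quad_ext v \<sigma>"
    and beta: "\<beta> \<in> GL n" "skew_hermitian \<sigma> \<beta>"
    and gamma: "\<gamma> \<in> GL n" "normal_mat n \<sigma> \<gamma>" "kottwitz n v \<sigma> \<gamma>"
      "regular_semisimple (mbar \<sigma> \<gamma> * \<gamma>)"
    and zeta: "\<zeta> \<in> GL n" "kottwitz_wrt n v \<sigma> \<beta> \<zeta>"
  shows "(\<forall>g\<in>GL n. minv n g * (mbar \<sigma> \<gamma> * \<gamma>) * g \<in> GL_over n (Ointeg v)
            \<longrightarrow> minv n g * \<gamma> * g \<in> GL_over n (Ointeg v))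
       \<and> (\<forall>g\<in>GL n. minv n g * \<gamma> * mbar \<sigma> g \<in> GL_over n (Ointeg v)
            \<longrightarrow> (\<exists>a\<in>GL_over n (fixed_field \<sigma>). \<exists>b\<in>GL_over n (Ointeg v). g = a * b))
       \<and> (\<forall>h\<in>unitary_group n \<sigma> \<beta>.
            minv n h * (minv n \<beta> * mstar \<sigma> \<zeta> * \<beta> * \<zeta>) * h \<in> GL_over n (Ointeg v)
            \<longrightarrow> minv n h * \<zeta> * h \<in> GL_over n (Ointeg v))"
proof -
  interpret unramified_quadratic v \<sigma> by (rule unramified_quadratic.intro[OF ext])
  show ?thesis
    using kottwitz_conj_GL_over_O[OF gamma(1,3)] kottwitz_twisted_conj_decomposition[OF gamma(1,3)]
      kottwitz_wrt_conj_GL_over_O[OF beta(1) zeta] by blast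
qed

end
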